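(* Bilocal Classical Theory (BCT) is a digitizable theory. (In fact every nontrivial system of BCT can serve as obit.)
   Context: BCT is an operational probabilistic theory with the following structure. Systems: a trivial system and, for every integer $D>1$, exactly one system of size $D$. For a nontrivial system $\mathrm A$ of size $D_{\mathrm A}$, every state is a nonnegative combination of the $D_{\mathrm A}$ pure states $|i)_{\mathrm A}$, the vertices of the simplex of deterministic states. For nontrivial $\mathrm A,\mathrm B$, the composite $\mathrm{AB}$ has size $2D_{\mathrm A}D_{\mathrm B}$ with pure states $|(ij)_s)_{\mathrm{AB}}$, $s\in\{+,-\}$, $|i)\boxtimes|j)=\tfrac12\sum_s|(ij)_s)$, and $((ij)_{s_1}k)_{s_2}=(i(jk)_{s_1s_2})_{s_1}$. Transformations act linearly, and identity transformations are denoted $\mathcal I$. Channels $\mathcal C\in\mathsf{Tr}_1(\mathrm E\to\mathrm F)$ between nontrivial systems are exactly those for which, for each $j\in\{1,\dots,D_{\mathrm E}\}$, there is a probability distribution $\{\lambda^{(j)}_{m\tau}\}$ over $(m,\tau)\in\{1,\dots,D_{\mathrm F}\}\times\{\pm\}$ with $(\mathcal I_{\mathrm A}\boxtimes\mathcal C)|(ij)_s)_{\mathrm{AE}}=\sum_{m,\tau}\lambda^{(j)}_{m\tau}|(im)_{\tau s})_{\mathrm{AF}}$ for every system $\mathrm A$ (signs multiply as $\pm1$). $\mathrm X^{\boxtimes k}$ denotes the composite of $k$ copies of $\mathrm X$. Two systems $\mathrm A_1,\mathrm A_2$ are asymptotically equivalent if: (1) there are integers $k_1,k_2<\infty$ and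 channels $\mathcal E\in\mathsf{Tr}_1(\mathrm A_1^{\boxtimes k_1}\to\mathrm A_2^{\boxtimes k_2})$, $\mathcal D\in\mathsf{Tr}_1(\mathrm A_2^{\boxtimes k_2}\to\mathrm A_1^{\boxtimes k_1})$ with $\mathcal D\mathcal E=\mathcal I_{\mathrm A_1^{\boxtimes k_1}}$; (2) symmetrically there are $h_1,h_2$ and channels $\mathcal G\in\mathsf{Tr}_1(\mathrm A_2^{\boxtimes h_2}\to\mathrm A_1^{\boxtimes h_1})$, $\mathcal F\in\mathsf{Tr}_1(\mathrm A_1^{\boxtimes h_1}\to\mathrm A_2^{\boxtimes h_2})$ with $\mathcal F\mathcal G=\mathcal I_{\mathrm A_2^{\boxtimes h_2}}$; (3) letting $M_2^{\min}(k_1)$ be the smallest $k_2$ for which (1) holds given $k_1$, and $M_1^{\min}(h_2)$ the smallest $h_1$ for which (2) holds given $h_2$, there is $k$ with $\lim_{k_1\to\infty}M_2^{\min}(k_1)/k_1=k$ and $\lim_{h_2\to\infty}M_1^{\min}(h_2)/h_2=k^{-1}$. A theory is digitizable if there exists a system $\mathrm B$ (an obit) such that for every system $\mathrm X$ there are $k<\infty$ and channels $\mathcal C\in\mathsf{Tr}_1(\mathrm X\to\mathrm B^{\boxtimes k})$, $\mathcal F\in\mathsf{Tr}_1(\mathrm B^{\boxtimes k}\to\mathrm X)$ with $\mathcal F\mathcal C=\mathcal I_{\mathrm X}$, and moreover any two systems with this property are asymptotically equivalent. *)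

theory Defs
  imports Complex_Main
begin

text \<open>Systems of BCT: a nontrivial system is identified by its size D (D \<ge> 2);
  there is exactly one system of each size. Pure states of a system of size D are
  indexed by 0..<D. Signs s \<in> {+,-} are encoded as bool, True = +.\<close>

definition sign_mult :: "bool \<Rightarrow> bool \<Rightarrow> bool" where
  "sign_mult \<tau> s = (\<tau> = s)"

text \<open>Size of the composite X^{\<boxtimes>k} of k copies of a system of size d
  (composite of sizes D_A, D_B has size 2 D_A D_B).\<close>
fun comp_pow :: "nat \<Rightarrow> nat \<Rightarrow> nat" where
  "comp_pow d 0 = 1"
| "comp_pow d (Suc 0) = d"
| "comp_pow d (Suc (Suc k)) = 2 * comp_pow d (Suc k) * d"

text \<open>A channel E \<rightarrow> F (sizes dE, dF) is given by the distributions
  C j m \<tau> = \<lambda>^{(j)}_{m\<tau>}, for j < dE, over (m,\<tau>) with m < dF.\<close>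
definition channel :: "nat \<Rightarrow> nat \<Rightarrow> (nat \<Rightarrow> nat \<Rightarrow> bool \<Rightarrow> real) \<Rightarrow> bool" where
  "channel dE dF C \<longleftrightarrow> 2 \<le> dE \<and> 2 \<le> dF \<and>
     (\<forall>j<dE. (\<forall>m \<tau>. 0 \<le> C j m \<tau>) \<and> (\<forall>m \<tau>. dF \<le> m \<longrightarrow> C j m \<tau> = 0)
        \<and> (\<Sum>m<dF. \<Sum>\<tau>\<in>UNIV. C j m \<tau>) = 1)"

text \<open>Vectors on the state space of a composite AE: coefficients w.r.t. the pure
  states |(ij)_s). The pure state |(ij)_s) itself:\<close>
definition pure_vec :: "nat \<Rightarrow> nat \<Rightarrow> bool \<Rightarrow> (nat \<Rightarrow> nat \<Rightarrow> bool \<Rightarrow> real)" where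
  "pure_vec i j s = (\<lambda>i' j' s'. if i' = i \<and> j' = j \<and> s' = s then 1 else 0)"

text \<open>Linear action of I_A \<boxtimes> C on vectors of AE, where
  (I_A \<boxtimes> C)|(ij)_s) = \<Sum>_{m,\<tau>} \<lambda>^{(j)}_{m\<tau>} |(im)_{\<tau>s}).\<close>
definition ext_act :: "nat \<Rightarrow> (nat \<Rightarrow> nat \<Rightarrow> bool \<Rightarrow> real)
    \<Rightarrow> (nat \<Rightarrow> nat \<Rightarrow> bool \<Rightarrow> real) \<Rightarrow> (nat \<Rightarrow> nat \<Rightarrow> bool \<Rightarrow> real)" where
  "ext_act dE C v = (\<lambda>i m \<sigma>. \<Sum>j<dE. \<Sum>s\<in>UNIV. v i j s *
      (\<Sum>\<tau>\<in>UNIV. if sign_mult \<tau> s = \<sigma> then C j m \<tau> else 0))"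

text \<open>D C = I_E: for every nontrivial A, (I_A \<boxtimes> D)(I_A \<boxtimes> C) acts as the identity
  on all pure states (hence on all states) of AE.\<close>
definition left_inverse :: "nat \<Rightarrow> nat \<Rightarrow> (nat \<Rightarrow> nat \<Rightarrow> bool \<Rightarrow> real)
    \<Rightarrow> (nat \<Rightarrow> nat \<Rightarrow> bool \<Rightarrow> real) \<Rightarrow> bool" where
  "left_inverse dE dF C D \<longleftrightarrow>
     (\<forall>dA\<ge>2. \<forall>i<dA. \<forall>j<dE. \<forall>s.
        ext_act dF D (ext_act dE C (pure_vec i j s)) = pure_vec i j s)"

definition embeds :: "nat \<Rightarrow> nat \<Rightarrow> bool" where
  "embeds dE dF \<longleftrightarrow> (\<exists>C D. channel dE dF C \<and> channel dF dE D \<and> left_inverse dE dF C D)"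

definition M2min :: "nat \<Rightarrow> nat \<Rightarrow> nat \<Rightarrow> nat" where
  "M2min a1 a2 k1 = (LEAST k2. 1 \<le> k2 \<and> embeds (comp_pow a1 k1) (comp_pow a2 k2))"

definition M1min :: "nat \<Rightarrow> nat \<Rightarrow> nat \<Rightarrow> nat" where
  "M1min a1 a2 h2 = (LEAST h1. 1 \<le> h1 \<and> embeds (comp_pow a2 h2) (comp_pow a1 h1))"

definition asym_equiv :: "nat \<Rightarrow> nat \<Rightarrow> bool" where
  "asym_equiv a1 a2 \<longleftrightarrow>
     (\<exists>k1\<ge>1. \<exists>k2\<ge>1. embeds (comp_pow a1 k1) (comp_pow a2 k2)) \<and>
     (\<exists>h1\<ge>1. \<exists>h2\<ge>1. embeds (comp_pow a2 h2) (comp_pow a1 h1)) \<and>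
     (\<forall>k1\<ge>1. \<exists>k2\<ge>1. embeds (comp_pow a1 k1) (comp_pow a2 k2)) \<and>
     (\<forall>h2\<ge>1. \<exists>h1\<ge>1. embeds (comp_pow a2 h2) (comp_pow a1 h1)) \<and>
     (\<exists>k::real. k > 0 \<and>
        ((\<lambda>k1. real (M2min a1 a2 k1) / real k1) \<longlongrightarrow> k) sequentially \<and>
        ((\<lambda>h2. real (M1min a1 a2 h2) / real h2) \<longlongrightarrow> inverse k) sequentially)"

definition obit :: "nat \<Rightarrow> bool" where
  "obit b \<longleftrightarrow> 2 \<le> b \<and> (\<forall>d\<ge>2. \<exists>k\<ge>1. embeds d (comp_pow b k))"

definition BCT_digitizable :: bool where
  "BCT_digitizable \<longleftrightarrow> (\<exists>b. obit b) \<and> (\<forall>b1 b2. obit b1 \<and> obit b2 \<longrightarrow> asym_equiv b1 b2)"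

end

theory Submission imports Defs begin

text \<open>A system of size a embeds reversibly into one of size b (a, b \<ge> 2) exactly when a \<le> b.
  Deterministic relabellings of the pure states give one direction. For the other, evaluating
  D C = I on the pure states shows that the trace sum over j, m, \<sigma> of C j m \<sigma> * D m j \<sigma> equals a,
  while it is at most the sum of all entries of D, which is b, because the entries of C are
  probabilities. Since 2 |X^k| = (2 |X|)^k for the k-fold composite, the least k2 for which
  X1^k1 embeds into X2^k2 is the least k2 with (2 |X1|)^k1 \<le> (2 |X2|)^k2, i.e. the ceiling of
  k1 log (2 |X2|) (2 |X1|). Hence every nontrivial system is an obit, and any two are
  asymptotically equivalent with rate log (2 |X2|) (2 |X1|).\<close>

lemma double_comp_pow_Suc: "2 * comp_pow d (Suc k) = (2 * d) ^ Suc k"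
  by (induction k) (simp_all add: algebra_simps)

lemma double_comp_pow: "1 \<le> n \<Longrightarrow> 2 * comp_pow d n = (2 * d) ^ n"
  using double_comp_pow_Suc by (cases n) auto

lemma comp_pow_ge_two:
  assumes "2 \<le> d" "1 \<le> n"
  shows "2 \<le> comp_pow d n"
proof -
  have "2 * 2 \<le> (2 * d) ^ 1" using assms(1) by simp
  also have "\<dots> \<le> (2 * d) ^ n" using assms by (intro power_increasing) auto
  also have "\<dots> = 2 * comp_pow d n" by (rule double_comp_pow[OF assms(2), symmetric])
  finally show ?thesis by simp
qed

lemma le_power_self:
  fixes b p :: nat
  assumes "1 < b"
  shows "p \<le> b ^ p"
proof -
  have "p < 2 ^ p" by (rule less_exp)
  also have "\<dots> \<le> b ^ p" using assms by (intro power_mono) auto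
  finally show ?thesis by simp
qed

text \<open>\<open>\<sigma> = s\<close> is the unique sign \<tau> with \<tau> s = \<sigma>.\<close>
lemma ext_act_apply:
  "ext_act dE C v i m \<sigma> = (\<Sum>j<dE. \<Sum>s\<in>UNIV. v i j s * C j m (\<sigma> = s))"
  unfolding ext_act_def sign_mult_def by (intro sum.cong refl) (auto simp: UNIV_bool)

lemma ext_act_pure_vec:
  assumes "j < dE"
  shows "ext_act dE C (pure_vec i j s) = (\<lambda>i' m \<sigma>. if i' = i then C j m (\<sigma> = s) else 0)"
proof (intro ext)
  fix i' m \<sigma>
  have "ext_act dE C (pure_vec i j s) i' m \<sigma> =
      (\<Sum>j'<dE. if j' = j then (if i' = i then C j m (\<sigma> = s) else 0) else 0)"
    unfolding ext_act_apply pure_vec_def by (intro sum.cong refl) (auto simp: UNIV_bool)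
  also have "\<dots> = (if i' = i then C j m (\<sigma> = s) else 0)"
    using assms by simp
  finally show "ext_act dE C (pure_vec i j s) i' m \<sigma> = (if i' = i then C j m (\<sigma> = s) else 0)" .
qed

definition det_channel :: "(nat \<Rightarrow> nat) \<Rightarrow> nat \<Rightarrow> nat \<Rightarrow> bool \<Rightarrow> real" where
  "det_channel f j m \<tau> = (if m = f j \<and> \<tau> then 1 else 0)"

lemma channel_det_channel:
  assumes "2 \<le> dE" "2 \<le> dF" "\<And>j. j < dE \<Longrightarrow> f j < dF"
  shows "channel dE dF (det_channel f)"
  using assms unfolding channel_def det_channel_def by (auto simp: UNIV_bool) (meson leD)

lemma ext_act_det_channel_pure_vec:
  assumes "j < dE"
  shows "ext_act dE (det_channel f) (pure_vec i j s) = pure_vec i (f j) s"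
proof -
  have "ext_act dE (det_channel f) (pure_vec i j s) =
      (\<lambda>i' m \<sigma>. if i' = i then det_channel f j m (\<sigma> = s) else 0)"
    by (rule ext_act_pure_vec[OF assms])
  also have "\<dots> = pure_vec i (f j) s"
    by (auto simp: det_channel_def pure_vec_def fun_eq_iff)
  finally show ?thesis .
qed

lemma embeds_if_le:
  assumes "2 \<le> a" "a \<le> b"
  shows "embeds a b"
proof -
  let ?C = "det_channel (\<lambda>j. j)" and ?D = "det_channel (\<lambda>m. if m < a then m else 0)"
  have "channel a b ?C" "channel b a ?D"
    using assms by (auto intro: channel_det_channel)
  moreover have "left_inverse a b ?C ?D"
    unfolding left_inverse_def using assms by (auto simp: ext_act_det_channel_pure_vec)
  ultimately show ?thesis unfolding embeds_def by blast
qed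

lemma channel_le_one:
  assumes "channel dE dF C" "j < dE"
  shows "C j m \<tau> \<le> 1"
proof (cases "m < dF")
  case True
  have nonneg: "\<And>m \<tau>. 0 \<le> C j m \<tau>" using assms unfolding channel_def by auto
  have "C j m \<tau> \<le> (\<Sum>\<tau>'\<in>UNIV. C j m \<tau>')"
    using nonneg by (intro member_le_sum) auto
  also have "\<dots> \<le> (\<Sum>m'<dF. \<Sum>\<tau>'\<in>UNIV. C j m' \<tau>')"
    using True nonneg by (intro member_le_sum[where f = "\<lambda>m'. \<Sum>\<tau>'\<in>UNIV. C j m' \<tau>'"] sum_nonneg) auto
  also have "\<dots> = 1" using assms unfolding channel_def by auto
  finally show ?thesis .
next
  case False
  then show ?thesis using assms unfolding channel_def by auto
qed

lemma left_inverse_trace: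
  assumes "left_inverse a b C D" "j < a"
  shows "(\<Sum>m<b. \<Sum>\<sigma>\<in>UNIV. C j m \<sigma> * D m j \<sigma>) = 1"
proof -
  have "ext_act b D (ext_act a C (pure_vec 0 j True)) 0 j True = pure_vec 0 j True 0 j True"
    using assms unfolding left_inverse_def by (metis order_refl pos2)
  then show ?thesis
    unfolding ext_act_pure_vec[OF assms(2)] ext_act_apply by (simp add: pure_vec_def)
qed

lemma le_if_embeds:
  assumes "embeds a b"
  shows "a \<le> b"
proof -
  obtain C D where C: "channel a b C" and D: "channel b a D" and CD: "left_inverse a b C D"
    using assms unfolding embeds_def by blast
  have C_nonneg: "0 \<le> C j m \<sigma>" if "j < a" for j m \<sigma>
    using C that unfolding channel_def by auto
  have D_nonneg: "0 \<le> D m j \<sigma>" if "m < b" for m j \<sigma>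
    using D that unfolding channel_def by auto
  have "real a = (\<Sum>j<a. \<Sum>m<b. \<Sum>\<sigma>\<in>UNIV. C j m \<sigma> * D m j \<sigma>)"
    using left_inverse_trace[OF CD] by simp
  also have "\<dots> \<le> (\<Sum>j<a. \<Sum>m<b. \<Sum>\<sigma>\<in>UNIV. D m j \<sigma>)"
    using channel_le_one[OF C] C_nonneg D_nonneg by (intro sum_mono mult_left_le_one_le) auto
  also have "\<dots> = (\<Sum>m<b. \<Sum>j<a. \<Sum>\<sigma>\<in>UNIV. D m j \<sigma>)"
    by (rule sum.swap)
  also have "\<dots> = real b"
    using D unfolding channel_def by simp
  finally show ?thesis by simp
qed

lemma embeds_iff_le: "2 \<le> a \<Longrightarrow> embeds a b \<longleftrightarrow> a \<le> b"
  using embeds_if_le le_if_embeds by blast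

lemma embeds_comp_pow_iff:
  assumes "2 \<le> x" "2 \<le> y" "1 \<le> n"
  shows "1 \<le> m \<and> embeds (comp_pow x n) (comp_pow y m) \<longleftrightarrow> (2 * x) ^ n \<le> (2 * y) ^ m"
proof (cases "1 \<le> m")
  case True
  have "embeds (comp_pow x n) (comp_pow y m) \<longleftrightarrow> 2 * comp_pow x n \<le> 2 * comp_pow y m"
    using assms comp_pow_ge_two by (simp add: embeds_iff_le)
  then show ?thesis using True assms(3) by (simp add: double_comp_pow)
next
  case False
  then have "m = 0" by simp
  moreover have "1 < (2 * x) ^ n" using assms by (intro one_less_power) auto
  ultimately show ?thesis by simp
qed

lemma ex_embeds_comp_pow:
  assumes "2 \<le> x" "2 \<le> y" "1 \<le> n"
  shows "\<exists>m\<ge>1. embeds (comp_pow x n) (comp_pow y m)"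
proof -
  have "(2 * x) ^ n \<le> (2 * y) ^ (2 * x) ^ n"
    using assms(2) by (intro le_power_self) simp
  then have "1 \<le> (2 * x) ^ n \<and> embeds (comp_pow x n) (comp_pow y ((2 * x) ^ n))"
    by (rule embeds_comp_pow_iff[OF assms, THEN iffD2])
  then show ?thesis by blast
qed

lemma obit_if_ge_two: "2 \<le> b \<Longrightarrow> obit b"
  using ex_embeds_comp_pow[of _ b 1] unfolding obit_def by auto

lemma Least_power_ge_bounds:
  fixes b p :: nat
  assumes "1 < b" "0 < p"
  shows "log b p \<le> (LEAST m. p \<le> b ^ m)" and "(LEAST m. p \<le> b ^ m) < log b p + 1"
proof -
  define M where "M = (LEAST m. p \<le> b ^ m)"
  have M: "p \<le> b ^ M"
    unfolding M_def using le_power_self[OF assms(1)] by (rule LeastI)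
  then show "log b p \<le> M"
    using assms by (intro log_of_power_le) (simp_all flip: of_nat_power)
  show "M < log b p + 1"
  proof (cases M)
    case 0
    with M assms have "p = 1" by simp
    with 0 show ?thesis by simp
  next
    case (Suc M')
    then have "b ^ M' < p"
      using not_less_Least[of M' "\<lambda>m. p \<le> b ^ m"] unfolding M_def by simp
    then have "M' < log b p"
      using assms by (intro less_log_of_power) (simp_all flip: of_nat_power)
    then show ?thesis using Suc by simp
  qed
qed

lemma Least_power_ge_power_ratio_tendsto:
  fixes a b :: nat
  assumes "1 < b" "0 < a"
  shows "(\<lambda>n. real (LEAST m. a ^ n \<le> b ^ m) / real n) \<longlonglongrightarrow> log b a"
proof (rule tendsto_sandwich)
  define M where "M n = (LEAST m. a ^ n \<le> b ^ m)" for n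
  have bounds: "log b a \<le> M n / n \<and> M n / n \<le> log b a + 1 / n" if "1 \<le> n" for n
  proof -
    have "log b (a ^ n) = n * log b a" by (simp add: log_nat_power)
    then have "n * log b a \<le> M n" "M n < n * log b a + 1"
      using Least_power_ge_bounds[of b "a ^ n"] assms unfolding M_def by (simp_all flip: of_nat_power)
    then show ?thesis using that by (simp add: field_simps)
  qed
  show "\<forall>\<^sub>F n in sequentially. log b a \<le> real (LEAST m. a ^ n \<le> b ^ m) / real n"
       "\<forall>\<^sub>F n in sequentially. real (LEAST m. a ^ n \<le> b ^ m) / real n \<le> log b a + 1 / n"
    using bounds unfolding M_def eventually_sequentially by blast+
  show "(\<lambda>n. log b a + 1 / real n) \<longlonglongrightarrow> log b a"
    using tendsto_add[OF tendsto_const lim_1_over_n] by simp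
qed simp

lemma M2min_ratio_tendsto:
  assumes "2 \<le> x" "2 \<le> y"
  shows "(\<lambda>n. real (M2min x y n) / real n) \<longlonglongrightarrow> log (2 * y) (2 * x)"
proof -
  have M2min_eq: "M2min x y n = (LEAST m. (2 * x) ^ n \<le> (2 * y) ^ m)" if "1 \<le> n" for n
    unfolding M2min_def using embeds_comp_pow_iff[OF assms that] by simp
  have "(\<lambda>n. real (LEAST m. (2 * x) ^ n \<le> (2 * y) ^ m) / real n)
      \<longlonglongrightarrow> log (2 * y) (2 * x)"
    using Least_power_ge_power_ratio_tendsto[of "2 * y" "2 * x"] assms by simp
  moreover have "\<forall>\<^sub>F n in sequentially.
      real (LEAST m. (2 * x) ^ n \<le> (2 * y) ^ m) / real n = real (M2min x y n) / real n"
    by (rule eventually_sequentiallyI[of 1]) (simp only: M2min_eq)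
  ultimately show ?thesis by (rule Lim_transform_eventually)
qed

lemma M1min_eq_M2min: "M1min a1 a2 = M2min a2 a1"
  unfolding M1min_def M2min_def ..

lemma asym_equiv_if_ge_two:
  assumes "2 \<le> b1" "2 \<le> b2"
  shows "asym_equiv b1 b2"
proof -
  define k where "k = log (2 * b2) (2 * b1)"
  have "k > 0"
    unfolding k_def log_def using assms by simp
  moreover have "(\<lambda>n. real (M2min b1 b2 n) / real n) \<longlonglongrightarrow> k"
    unfolding k_def using assms by (rule M2min_ratio_tendsto)
  moreover have "(\<lambda>n. real (M2min b2 b1 n) / real n) \<longlonglongrightarrow> inverse k"
  proof -
    have "inverse k = log (2 * b1) (2 * b2)"
      unfolding k_def log_def by simp
    then show ?thesis using M2min_ratio_tendsto[OF assms(2,1)] by simp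
  qed
  moreover have "\<forall>n\<ge>1. \<exists>m\<ge>1. embeds (comp_pow b1 n) (comp_pow b2 m)"
    using ex_embeds_comp_pow[OF assms] by blast
  moreover have "\<forall>n\<ge>1. \<exists>m\<ge>1. embeds (comp_pow b2 n) (comp_pow b1 m)"
    using ex_embeds_comp_pow[OF assms(2,1)] by blast
  ultimately show ?thesis
    unfolding asym_equiv_def M1min_eq_M2min by (meson order_refl)
qed

theorem lemma2:
  shows "BCT_digitizable \<and> (\<forall>b\<ge>2. obit b)"
proof -
  have "obit 2" by (simp add: obit_if_ge_two)
  moreover have "2 \<le> b" if "obit b" for b
    using that unfolding obit_def by simp
  ultimately show ?thesis
    unfolding BCT_digitizable_def using obit_if_ge_two asym_equiv_if_ge_two by blast
qed

end
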